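(* Let $\{\emptyset,\Omega\}=\mathcal{F}_0\subseteq\cdots\subseteq\mathcal{F}_n$ be $\sigma$-fields on a probability space and let $(\xi_i,\mathcal{F}_i)_{i=1,\dots,n}$ be square-integrable supermartingale differences (each $\xi_i$ is $\mathcal{F}_i$-measurable with $\mathbf{E}\xi_i^2<\infty$ and $\mathbf{E}(\xi_i\mid\mathcal{F}_{i-1})\le0$). Then for all $y\ge0$, all $\lambda>0$ and each $i$, \[ \mathbf{E}\left(\exp\left\{\lambda\xi_i-\tfrac12(\lambda\xi_i)^2\mathbf{1}_{\{\xi_i>y\}}\right\}\,\Big|\,\mathcal{F}_{i-1}\right)\le\exp\left\{\left(\frac{e^{\lambda y}-1-\lambda y}{y^2}\right)\mathbf{E}\big(\xi_i^2\mathbf{1}_{\{\xi_i\le y\}}\mid\mathcal{F}_{i-1}\big)\right\}, \] where by convention $\frac{e^{\lambda y}-1-\lambda y}{y^2}=\frac{\lambda^2}{2}$ when $y=0$. *)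

theory Defs
  imports "HOL-Probability.Probability"
begin

definition psi_coef :: "real \<Rightarrow> real \<Rightarrow> real" where
  "psi_coef lam y = (if y = 0 then lam\<^sup>2 / 2 else (exp (lam * y) - 1 - lam * y) / y\<^sup>2)"

end

theory Submission
  imports Defs
begin

text \<open>Write \<open>t = \<lambda>\<xi>\<close>. On \<open>{\<xi> > y}\<close> the truncated exponential satisfies
  \<open>exp (t - t\<^sup>2/2) \<le> 1 + t\<close>, because \<open>t - t\<^sup>2/2 \<le> ln (1 + t)\<close> for \<open>t \<ge> 0\<close>. On \<open>{\<xi> \<le> y}\<close>
  one has \<open>exp t \<le> 1 + t + \<psi>(\<lambda>,y) \<xi>\<^sup>2\<close>: for \<open>\<xi> > 0\<close> because \<open>(e\<^sup>u - 1 - u)/u\<^sup>2\<close> is increasing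
  on \<open>(0,\<infinity>)\<close>, for \<open>\<xi> \<le> 0\<close> because \<open>e\<^sup>u \<le> 1 + u + u\<^sup>2/2\<close> there and \<open>\<psi>(\<lambda>,y) \<ge> \<lambda>\<^sup>2/2\<close>.
  Taking conditional expectations of this pointwise bound, the linear term \<open>\<lambda> E(\<xi> | F)\<close> is
  nonpositive, and \<open>1 + s \<le> e\<^sup>s\<close> concludes. Only the fact that \<open>F (i - 1)\<close> is a sub-\<sigma>-algebra
  is used.\<close>

lemma exp_taylor2_remainder_mono:
  fixes a b :: real
  assumes "a \<le> b"
  shows "exp a - 1 - a - a\<^sup>2 / 2 \<le> exp b - 1 - b - b\<^sup>2 / 2"
proof (rule DERIV_nonneg_imp_nondecreasing[OF assms])
  fix x :: real
  have "DERIV (\<lambda>a. exp a - 1 - a - a\<^sup>2 / 2) x :> exp x - 1 - x"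
    by (auto intro!: derivative_eq_intros)
  moreover have "0 \<le> exp x - 1 - x"
    using exp_ge_add_one_self[of x] by linarith
  ultimately show "\<exists>d. DERIV (\<lambda>a. exp a - 1 - a - a\<^sup>2 / 2) x :> d \<and> 0 \<le> d"
    by blast
qed

lemma exp_le_taylor2_nonpos: "(u::real) \<le> 0 \<Longrightarrow> exp u \<le> 1 + u + u\<^sup>2 / 2"
  using exp_taylor2_remainder_mono[of u 0] by simp

lemma taylor2_le_exp_nonneg: "0 \<le> (u::real) \<Longrightarrow> 1 + u + u\<^sup>2 / 2 \<le> exp u"
  using exp_taylor2_remainder_mono[of 0 u] by simp

lemma diff_half_square_le_ln_add_one: 
  fixes t :: real
  assumes "0 \<le> t"
  shows "t - t\<^sup>2 / 2 \<le> ln (1 + t)"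
proof -
  have "ln (1 + 0) - 0 + 0\<^sup>2 / 2 \<le> ln (1 + t) - t + t\<^sup>2 / 2"
  proof (rule DERIV_nonneg_imp_nondecreasing[OF assms])
    fix x :: real
    assume "0 \<le> x" "x \<le> t"
    then have "DERIV (\<lambda>a. ln (1 + a) - a + a\<^sup>2 / 2) x :> x\<^sup>2 / (1 + x)"
      by (auto intro!: derivative_eq_intros simp: field_simps power2_eq_square)
    with \<open>0 \<le> x\<close> show "\<exists>d. DERIV (\<lambda>a. ln (1 + a) - a + a\<^sup>2 / 2) x :> d \<and> 0 \<le> d"
      by force
  qed
  then show ?thesis by simp
qed

lemma exp_diff_half_square_le_one_add:
  fixes t :: real
  assumes "0 \<le> t"
  shows "exp (t - t\<^sup>2 / 2) \<le> 1 + t"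
proof -
  have "exp (t - t\<^sup>2 / 2) \<le> exp (ln (1 + t))"
    using diff_half_square_le_ln_add_one[OF assms] by simp
  also have "\<dots> = 1 + t"
    using assms by simp
  finally show ?thesis .
qed

lemma one_sub_mult_exp_le_one: "(1 - x) * exp x \<le> (1::real)"
proof -
  have "(1 - x) * exp x \<le> exp (- x) * exp x"
    by (rule mult_right_mono) (use exp_ge_add_one_self[of "- x"] in simp_all)
  then show ?thesis
    by (simp add: exp_minus field_simps)
qed

lemma sub_two_mult_exp_add_nonneg:
  fixes u :: real
  assumes "0 \<le> u"
  shows "0 \<le> (u - 2) * exp u + u + 2"
proof -
  have "(0 - 2) * exp 0 + 0 + 2 \<le> (u - 2) * exp u + u + 2"
  proof (rule DERIV_nonneg_imp_nondecreasing[OF assms])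
    fix x :: real
    have "DERIV (\<lambda>a. (a - 2) * exp a + a + 2) x :> 1 - (1 - x) * exp x"
      by (auto intro!: derivative_eq_intros simp: algebra_simps)
    then show "\<exists>d. DERIV (\<lambda>a. (a - 2) * exp a + a + 2) x :> d \<and> 0 \<le> d"
      using one_sub_mult_exp_le_one[of x] by force
  qed
  then show ?thesis by simp
qed

lemma exp_remainder_div_square_mono:
  fixes u v :: real
  assumes "0 < u" "u \<le> v"
  shows "(exp u - 1 - u) / u\<^sup>2 \<le> (exp v - 1 - v) / v\<^sup>2"
proof (rule DERIV_nonneg_imp_nondecreasing[OF assms(2)])
  fix x :: real
  assume "u \<le> x"
  with assms have "0 < x" by simp
  then have "DERIV (\<lambda>a. (exp a - 1 - a) / a\<^sup>2) x :> ((x - 2) * exp x + x + 2) / x ^ 3"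
    by (auto intro!: derivative_eq_intros simp: field_simps power2_eq_square power3_eq_cube)
  moreover have "0 \<le> ((x - 2) * exp x + x + 2) / x ^ 3"
    using sub_two_mult_exp_add_nonneg[of x] \<open>0 < x\<close> by simp
  ultimately show "\<exists>d. DERIV (\<lambda>a. (exp a - 1 - a) / a\<^sup>2) x :> d \<and> 0 \<le> d"
    by blast
qed

lemma psi_coef_eq:
  assumes "0 < lam" "0 < y"
  shows "psi_coef lam y = lam\<^sup>2 * ((exp (lam * y) - 1 - lam * y) / (lam * y)\<^sup>2)"
  using assms by (simp add: psi_coef_def power_mult_distrib field_simps)

lemma half_square_le_psi_coef:
  assumes "0 < lam" "0 \<le> y"
  shows "lam\<^sup>2 / 2 \<le> psi_coef lam y"
proof (cases "y = 0")
  case False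
  have "lam\<^sup>2 / 2 * y\<^sup>2 \<le> psi_coef lam y * y\<^sup>2"
    using taylor2_le_exp_nonneg[of "lam * y"] assms False
    by (simp add: psi_coef_def power_mult_distrib)
  with False show ?thesis
    by (simp add: mult_le_cancel_right)
qed (simp add: psi_coef_def)

lemma exp_le_psi_coef_bound:
  assumes "0 < lam" "0 \<le> y" "x \<le> y"
  shows "exp (lam * x) \<le> 1 + lam * x + psi_coef lam y * x\<^sup>2"
proof (cases "x \<le> 0")
  case True
  with assms have "exp (lam * x) \<le> 1 + lam * x + lam\<^sup>2 / 2 * x\<^sup>2"
    using exp_le_taylor2_nonpos[of "lam * x"]
    by (simp add: mult_nonneg_nonpos power_mult_distrib)
  also have "\<dots> \<le> 1 + lam * x + psi_coef lam y * x\<^sup>2"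
    using half_square_le_psi_coef[OF assms(1,2)] by (intro add_left_mono mult_right_mono) simp_all
  finally show ?thesis .
next
  case False
  with assms have "0 < x" "0 < y" "0 < lam * x" "lam * x \<le> lam * y" by auto
  then have "(exp (lam * x) - 1 - lam * x) / (lam * x)\<^sup>2 * (lam * x)\<^sup>2
      \<le> (exp (lam * y) - 1 - lam * y) / (lam * y)\<^sup>2 * (lam * x)\<^sup>2"
    by (intro mult_right_mono exp_remainder_div_square_mono) simp_all
  with \<open>0 < x\<close> \<open>0 < y\<close> assms(1) show ?thesis
    by (simp add: psi_coef_eq power_mult_distrib)
qed

lemma exp_truncated_le_psi_coef_bound:
  fixes lam y x :: real
  assumes "0 < lam" "0 \<le> y"
  shows "exp (lam * x - (lam * x)\<^sup>2 / 2 * of_bool (y < x))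
    \<le> 1 + lam * x + psi_coef lam y * (x\<^sup>2 * of_bool (x \<le> y))"
proof (cases "y < x")
  case True
  with assms have "0 \<le> lam * x" by simp
  with True show ?thesis
    using exp_diff_half_square_le_one_add[of "lam * x"] by simp
qed (use exp_le_psi_coef_bound[OF assms] in simp)

context finite_measure_subalgebra
begin

lemma real_cond_exp_le_exp_of_linear_bound:
  fixes X Q E :: "'a \<Rightarrow> real" and a c :: real
  assumes X: "integrable M X" and Q: "integrable M Q"
    and E[measurable]: "E \<in> borel_measurable M"
    and E_nonneg: "\<And>z. z \<in> space M \<Longrightarrow> 0 \<le> E z"
    and E_le: "\<And>z. z \<in> space M \<Longrightarrow> E z \<le> 1 + a * X z + c * Q z"
    and "0 \<le> a" and X_cond: "AE x in M. real_cond_exp M F X x \<le> 0"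
  shows "AE x in M. real_cond_exp M F E x \<le> exp (c * real_cond_exp M F Q x)"
proof -
  have R: "integrable M (\<lambda>z. 1 + a * X z + c * Q z)"
    using X Q by simp
  have "integrable M E"
    by (rule Bochner_Integration.integrable_bound[OF R])
      (auto intro!: AE_I2 simp: E_nonneg intro: order.trans[OF E_le abs_ge_self])
  then have "AE x in M. real_cond_exp M F E x \<le> real_cond_exp M F (\<lambda>z. 1 + a * X z + c * Q z) x"
    using E_le R by (intro real_cond_exp_mono AE_I2) simp_all
  moreover have "AE x in M. real_cond_exp M F (\<lambda>z. 1 + a * X z + c * Q z) x
      = real_cond_exp M F (\<lambda>z. 1 + a * X z) x + real_cond_exp M F (\<lambda>z. c * Q z) x"
    using X Q by (intro real_cond_exp_add) simp_all
  moreover have "AE x in M. real_cond_exp M F (\<lambda>z. 1 + a * X z) x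
      = real_cond_exp M F (\<lambda>_. 1) x + real_cond_exp M F (\<lambda>z. a * X z) x"
    using X by (intro real_cond_exp_add) simp_all
  moreover have "AE x in M. real_cond_exp M F (\<lambda>_. 1) x = 1"
    by (rule real_cond_exp_F_meas) simp_all
  moreover have "AE x in M. real_cond_exp M F (\<lambda>z. a * X z) x = a * real_cond_exp M F X x"
    using X by (rule real_cond_exp_cmult)
  moreover have "AE x in M. real_cond_exp M F (\<lambda>z. c * Q z) x = c * real_cond_exp M F Q x"
    using Q by (rule real_cond_exp_cmult)
  ultimately show ?thesis
    using X_cond
  proof eventually_elim
    case (elim x)
    have "a * real_cond_exp M F X x \<le> 0"
      using elim(7) \<open>0 \<le> a\<close> by (simp add: mult_nonneg_nonpos)
    with elim have "real_cond_exp M F E x \<le> 1 + c * real_cond_exp M F Q x"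
      by linarith
    also have "\<dots> \<le> exp (c * real_cond_exp M F Q x)"
      by (rule exp_ge_add_one_self)
    finally show ?case .
  qed
qed

end

theorem lemma4p1:
  fixes M :: "'a measure" and F :: "nat \<Rightarrow> 'a measure" and \<xi> :: "nat \<Rightarrow> 'a \<Rightarrow> real"
    and n :: nat
  assumes prob: "prob_space M"
    and sub: "\<And>i. i \<le> n \<Longrightarrow> subalgebra M (F i)"
    and F0: "sets (F 0) = {{}, space M}"
    and mono: "\<And>i. i < n \<Longrightarrow> sets (F i) \<subseteq> sets (F (Suc i))"
    and meas: "\<And>i. i \<in> {1..n} \<Longrightarrow> \<xi> i \<in> borel_measurable (F i)"
    and sq_int: "\<And>i. i \<in> {1..n} \<Longrightarrow> integrable M (\<lambda>x. (\<xi> i x)\<^sup>2)"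
    and supmart: "\<And>i. i \<in> {1..n} \<Longrightarrow> AE x in M. real_cond_exp M (F (i - 1)) (\<xi> i) x \<le> 0"
  shows "\<forall>y \<ge> 0. \<forall>lam > 0. \<forall>i \<in> {1..n}.
    AE x in M.
      real_cond_exp M (F (i - 1))
        (\<lambda>z. exp (lam * \<xi> i z - (lam * \<xi> i z)\<^sup>2 / 2 * indicator {w. \<xi> i w > y} z)) x
      \<le> exp (psi_coef lam y *
          real_cond_exp M (F (i - 1)) (\<lambda>z. (\<xi> i z)\<^sup>2 * indicator {w. \<xi> i w \<le> y} z) x)"
proof (intro allI impI ballI)
  fix y lam :: real and i
  assume y: "0 \<le> y" and lam: "0 < lam" and i: "i \<in> {1..n}"
  interpret prob_space M by (rule prob)
  interpret finite_measure_subalgebra M "F (i - 1)"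
    using sub[of "i - 1"] i by unfold_locales auto
  have [measurable]: "\<xi> i \<in> borel_measurable M"
    using measurable_from_subalg[OF sub meas] i by simp
  have X: "integrable M (\<xi> i)"
    using sq_int[OF i] by (rule square_integrable_imp_integrable[rotated]) simp
  have Q: "integrable M (\<lambda>z. (\<xi> i z)\<^sup>2 * indicator {w. \<xi> i w \<le> y} z)"
    by (rule Bochner_Integration.integrable_bound[OF sq_int[OF i]]) (auto simp: indicator_def)
  show "AE x in M. real_cond_exp M (F (i - 1))
        (\<lambda>z. exp (lam * \<xi> i z - (lam * \<xi> i z)\<^sup>2 / 2 * indicator {w. \<xi> i w > y} z)) x
      \<le> exp (psi_coef lam y *
          real_cond_exp M (F (i - 1)) (\<lambda>z. (\<xi> i z)\<^sup>2 * indicator {w. \<xi> i w \<le> y} z) x)"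
    using exp_truncated_le_psi_coef_bound[OF lam y] lam supmart[OF i]
    by (intro real_cond_exp_le_exp_of_linear_bound[OF X Q, where a = lam])
      (auto simp: indicator_def)
qed

end
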